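(* Let $L:\mathbb{R}^{n\times d}\to\mathbb{R}$ be a topological loss $L(X)=\ell(\mathrm{Dgm}(X))$, assumed lower bounded and locally semi-convex. Let $\tilde X:[0,\infty)\to\mathbb{R}^{n\times d}$ solve $$\frac{\mathrm{d}\tilde X}{\mathrm{d}t}=-\tilde v_t(\tilde X(t)),\qquad \tilde X(0)=X_0,$$ where, for each $t$, $\tilde v_t:\mathbb{R}^d\to\mathbb{R}^d$ is the diffeomorphic interpolation of the vanilla gradient $\nabla L(\tilde X(t))$ (defined in the context), and $\tilde v_t(\tilde X(t))$ is the $n\times d$ matrix whose $i$-th row is $\tilde v_t(\tilde X(t)_i)$. Then for each $t\ge 0$, $$\frac{\mathrm{d}L(\tilde X(t))}{\mathrm{d}t}=-\|\nabla L(\tilde X(t))\|^2\le 0.$$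
   Context: For a point cloud $X=(x_1,\dots,x_n)\in\mathbb{R}^{n\times d}$, $\mathrm{Dgm}(X)$ is the persistence diagram of the Vietoris–Rips filtration of $X$, in which a simplex $\{x_{i_1},\dots,x_{i_p}\}$ is present at parameter $t$ iff all pairwise distances $\|x_{i_j}-x_{i_{j'}}\|\le t$. It is a finite multiset of points $(b,d)$ with $b\le d$, and $\ell$ is a real-valued function of persistence diagrams. $\nabla L(X)\in\mathbb{R}^{n\times d}$ is the gradient of $L$ at $X$, with $i$-th row $\nabla L(X)_i$. The paper treats $\nabla L$ as existing along the trajectory. Diffeomorphic interpolation: given $X=(x_1,\dots,x_n)$, let $I=\{i:\nabla L(X)_i\neq 0\}$ and $a_i=\nabla L(X)_i$ for $i\in I$. Let $\rho_\sigma(u)=e^{-u^2/(2\sigma^2)}$ for a fixed bandwidth $\sigma>0$. Let $\mathbf{K}$ be the block matrix $(\rho_\sigma(\|x_i-x_j\|)I_d)_{i,j\in I}$ and $\alpha=\mathbf{K}^{-1}a$, where $a=(a_i)_{i\in I}$. Define $$\tilde v(x)=\sum_{i\in I}\rho_\sigma(\|x-x_i\|)\,\alpha_i.$$ This is the minimal-norm element of the vector-valued Gaussian RKHS with $\tilde v(x_i)=a_i$ for all $i\in I$. At time $t$, $\tilde v_t$ is this construction applied to $X=\tilde X(t)$. *)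

theory Defs
  imports "HOL-Analysis.Analysis"
begin

text \<open>Point clouds X in R^{n x d} are modelled as real^'d^'n: row i is X$i in real^'d.
  The norm / inner product on real^'d^'n is the Frobenius one.\<close>

definition gauss_rho :: "real \<Rightarrow> real \<Rightarrow> real" where
  "gauss_rho \<sigma> u = exp (- (u ^ 2) / (2 * \<sigma> ^ 2))"

definition interp_support :: "real^'d^'n \<Rightarrow> 'n set" where
  "interp_support G = {i. G $ i \<noteq> 0}"

text \<open>The block kernel matrix (rho(|x_i - x_j|) I_d)_{i,j in I}, indexed by pairs (i,k),
  padded by the identity outside I x I (block-diagonal padding; its inverse restricted to
  I x I is the inverse of the original block matrix).\<close>
definition kernel_block :: "real \<Rightarrow> real^'d^'n \<Rightarrow> real^'d^'n \<Rightarrow> real^('n \<times> 'd)^('n \<times> 'd)" where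
  "kernel_block \<sigma> X G =
     (\<chi> p q. if fst p \<in> interp_support G \<and> fst q \<in> interp_support G
             then gauss_rho \<sigma> (dist (X $ fst p) (X $ fst q)) * (if snd p = snd q then 1 else 0)
             else (if p = q then 1 else 0))"

definition interp_alpha :: "real \<Rightarrow> real^'d^'n \<Rightarrow> real^'d^'n \<Rightarrow> 'n \<Rightarrow> real^'d" where
  "interp_alpha \<sigma> X G i =
     (let a = (\<chi> p. if fst p \<in> interp_support G then G $ fst p $ snd p else 0);
          \<alpha> = matrix_inv (kernel_block \<sigma> X G) *v a
      in (\<chi> k. \<alpha> $ (i, k)))"

definition diff_interp :: "real \<Rightarrow> real^'d^'n \<Rightarrow> real^'d^'n \<Rightarrow> real^'d \<Rightarrow> real^'d" where
  "diff_interp \<sigma> X G x =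
     (\<Sum>i\<in>interp_support G. gauss_rho \<sigma> (dist x (X $ i)) *\<^sub>R interp_alpha \<sigma> X G i)"

definition locally_semiconvex :: "('a::real_normed_vector \<Rightarrow> real) \<Rightarrow> bool" where
  "locally_semiconvex L \<longleftrightarrow>
     (\<forall>X. \<exists>U c. open U \<and> convex U \<and> X \<in> U \<and> c \<ge> 0 \<and>
        convex_on U (\<lambda>Y. L Y + c / 2 * (norm Y) ^ 2))"

end

theory Submission
  imports Defs
begin

text \<open>The interpolated field \<open>v\<close> reproduces the gradient at every point \<open>x\<^sub>i\<close> where the gradient
  does not vanish, so \<open>\<langle>\<nabla>L(X), v(X)\<rangle> = \<Sum>\<^sub>i\<^sub>\<in>\<^sub>I |\<nabla>L(X)\<^sub>i|\<^sup>2 = \<parallel>\<nabla>L(X)\<parallel>\<^sup>2\<close>: the rows outside \<open>I\<close>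
  contribute nothing on either side. The chain rule along \<open>dX/dt = -v(X)\<close> then gives
  \<open>dL(X(t))/dt = -\<parallel>\<nabla>L(X(t))\<parallel>\<^sup>2\<close>.\<close>

lemma matrix_inv_right:
  fixes A :: "'a::semiring_1^'n^'m"
  assumes "invertible A"
  shows "A ** matrix_inv A = mat 1"
  using someI_ex[OF assms[unfolded invertible_def]] unfolding matrix_inv_def by blast

lemma kernel_block_mult_vec_support:
  fixes X G :: "real^'d^'n" and \<beta> :: "real^('n \<times> 'd)"
  assumes i: "i \<in> interp_support G"
  shows "(kernel_block \<sigma> X G *v \<beta>) $ (i, k)
       = (\<Sum>j\<in>interp_support G. gauss_rho \<sigma> (dist (X $ i) (X $ j)) * \<beta> $ (j, k))"
proof -
  have row: "(\<Sum>l\<in>UNIV. kernel_block \<sigma> X G $ (i, k) $ (j, l) * \<beta> $ (j, l))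
        = (if j \<in> interp_support G then gauss_rho \<sigma> (dist (X $ i) (X $ j)) * \<beta> $ (j, k) else 0)"
    for j
  proof (cases "j \<in> interp_support G")
    case True
    then show ?thesis
      using i
      by (simp add: kernel_block_def mult.assoc if_distrib[of "\<lambda>z. z * _"]
          sum_distrib_left[symmetric] cong: if_cong)
  next
    case False
    then have "i \<noteq> j" using i by auto
    then show ?thesis using False by (simp add: kernel_block_def)
  qed
  have "(kernel_block \<sigma> X G *v \<beta>) $ (i, k)
      = (\<Sum>j\<in>UNIV. \<Sum>l\<in>UNIV. kernel_block \<sigma> X G $ (i, k) $ (j, l) * \<beta> $ (j, l))"
    unfolding matrix_vector_mult_def sum.cartesian_product UNIV_Times_UNIV
    by (simp add: case_prod_beta)
  also have "\<dots> = (\<Sum>j\<in>interp_support G. gauss_rho \<sigma> (dist (X $ i) (X $ j)) * \<beta> $ (j, k))"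
    by (simp add: row sum.If_cases)
  finally show ?thesis .
qed

lemma diff_interp_at_support:
  fixes X G :: "real^'d^'n"
  assumes inv: "invertible (kernel_block \<sigma> X G)" and i: "i \<in> interp_support G"
  shows "diff_interp \<sigma> X G (X $ i) = G $ i"
proof -
  define a :: "real^('n \<times> 'd)"
    where "a = (\<chi> p. if fst p \<in> interp_support G then G $ fst p $ snd p else 0)"
  define \<alpha> where "\<alpha> = matrix_inv (kernel_block \<sigma> X G) *v a"
  have solves: "kernel_block \<sigma> X G *v \<alpha> = a"
    using inv by (simp add: \<alpha>_def matrix_vector_mul_assoc matrix_inv_right)
  have alpha: "interp_alpha \<sigma> X G j = (\<chi> k. \<alpha> $ (j, k))" for j
    unfolding interp_alpha_def \<alpha>_def a_def Let_def ..
  show ?thesis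
  proof (subst vec_eq_iff, intro allI)
    fix k
    have "diff_interp \<sigma> X G (X $ i) $ k
        = (\<Sum>j\<in>interp_support G. gauss_rho \<sigma> (dist (X $ i) (X $ j)) * \<alpha> $ (j, k))"
      by (simp add: diff_interp_def alpha sum_component)
    also have "\<dots> = (kernel_block \<sigma> X G *v \<alpha>) $ (i, k)"
      using i by (rule kernel_block_mult_vec_support[symmetric])
    also have "\<dots> = G $ i $ k"
      using i by (simp add: solves a_def)
    finally show "diff_interp \<sigma> X G (X $ i) $ k = G $ i $ k" .
  qed
qed

lemma inner_diff_interp_nodes:
  fixes X G :: "real^'d^'n"
  assumes inv: "invertible (kernel_block \<sigma> X G)"
  shows "G \<bullet> (\<chi> i. diff_interp \<sigma> X G (X $ i)) = (norm G)\<^sup>2"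
proof -
  have "G $ i \<bullet> diff_interp \<sigma> X G (X $ i) = G $ i \<bullet> G $ i" for i
    using diff_interp_at_support[OF inv, of i] by (cases "G $ i = 0") (auto simp: interp_support_def)
  then show ?thesis
    by (simp add: inner_vec_def power2_norm_eq_inner)
qed

lemma gderiv_compose_vector_derivative:
  assumes "GDERIV f (x t) :> g"
    and "(x has_vector_derivative v) (at t within S)"
  shows "((\<lambda>s. f (x s)) has_real_derivative (g \<bullet> v)) (at t within S)"
proof -
  have "(f has_derivative (\<lambda>h. h \<bullet> g)) (at (x t) within x ` S)"
    using assms(1) unfolding gderiv_def by (rule has_derivative_at_withinI)
  with assms(2) have "((\<lambda>s. f (x s)) has_derivative (\<lambda>h. (h *\<^sub>R v) \<bullet> g)) (at t within S)"
    unfolding has_vector_derivative_def by (rule diff_chain_within[unfolded o_def])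
  moreover have "(\<lambda>h. (h *\<^sub>R v) \<bullet> g) = (*) (g \<bullet> v)"
    by (auto simp: inner_commute)
  ultimately show ?thesis
    by (simp add: has_field_derivative_def)
qed

theorem proposition1:
  fixes L :: "real^'d^'n \<Rightarrow> real"
    and gradL :: "real^'d^'n \<Rightarrow> real^'d^'n"
    and Xt :: "real \<Rightarrow> real^'d^'n"
    and X0 :: "real^'d^'n"
    and \<sigma> :: real
  assumes lower_bounded: "\<exists>c. \<forall>X. c \<le> L X"
    and semiconvex: "locally_semiconvex L"
    and sigma_pos: "\<sigma> > 0"
    and grad: "\<And>t. t \<ge> 0 \<Longrightarrow> GDERIV L (Xt t) :> gradL (Xt t)"
    and kernel_inv: "\<And>t. t \<ge> 0 \<Longrightarrow> invertible (kernel_block \<sigma> (Xt t) (gradL (Xt t)))"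
    and ode: "\<And>t. t \<ge> 0 \<Longrightarrow>
       (Xt has_vector_derivative
          (- (\<chi> i. diff_interp \<sigma> (Xt t) (gradL (Xt t)) (Xt t $ i)))) (at t within {0..})"
    and init: "Xt 0 = X0"
    and t_nonneg: "t \<ge> 0"
  shows "((\<lambda>s. L (Xt s)) has_real_derivative (- (norm (gradL (Xt t)))\<^sup>2)) (at t within {0..})
         \<and> - (norm (gradL (Xt t)))\<^sup>2 \<le> 0"
proof -
  have "((\<lambda>s. L (Xt s)) has_real_derivative
          gradL (Xt t) \<bullet> - (\<chi> i. diff_interp \<sigma> (Xt t) (gradL (Xt t)) (Xt t $ i)))
        (at t within {0..})"
    using grad[OF t_nonneg] ode[OF t_nonneg] by (rule gderiv_compose_vector_derivative)
  moreover have "gradL (Xt t) \<bullet> - (\<chi> i. diff_interp \<sigma> (Xt t) (gradL (Xt t)) (Xt t $ i))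
      = - (norm (gradL (Xt t)))\<^sup>2"
    using inner_diff_interp_nodes[OF kernel_inv[OF t_nonneg]] by simp
  ultimately show ?thesis by simp
qed

end
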